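(* Let $k$ be a field and let $A$ be a $k$-algebra with filtration $A_0\subseteq A_1\subseteq\cdots$ (subspaces with $\bigcup_nA_n=A$ and $A_iA_j\subseteq A_{i+j}$). Let $R=\bigoplus_{n\ge0}x^nA_n\subseteq A[x]$ be the Rees algebra. Let $a(x)=a_1x+\cdots+a_mx^m\in R$ with $a_i\in A_i$, and suppose $a(x)$ is integral over $k[x]$. Then $a(x)^N\in xR$ for some $N\ge0$.
   Context: $A$ is associative with unit, $A[x]$ is the polynomial algebra over $A$ in a central indeterminate $x$, and $k[x]\subseteq A[x]$ via $k\subseteq A$. An element $a(x)\in A[x]$ is integral over $k[x]$ if $a(x)^n+p_{n-1}(x)a(x)^{n-1}+\cdots+p_0(x)=0$ for some $n\ge1$ and $p_i(x)\in k[x]$. Here $xR=\bigoplus_{n\ge1}x^nA_{n-1}$. *)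

theory Defs
  imports "HOL-Computational_Algebra.Formal_Power_Series" "HOL-Computational_Algebra.Polynomial"
begin

text \<open>The polynomial algebra A[x] over a (possibly noncommutative) ring A is modelled
  as the formal power series over A with finite support.\<close>

definition is_apoly :: "'a::zero fps \<Rightarrow> bool" where
  "is_apoly f \<longleftrightarrow> finite {n. fps_nth f n \<noteq> 0}"

definition k_algebra :: "('k::field \<Rightarrow> 'a::ring_1) \<Rightarrow> bool" where
  "k_algebra phi \<longleftrightarrow>
     phi 1 = 1 \<and> (\<forall>c d. phi (c + d) = phi c + phi d) \<and>
     (\<forall>c d. phi (c * d) = phi c * phi d) \<and> (\<forall>c y. phi c * y = y * phi c)"

definition k_subspace :: "('k::field \<Rightarrow> 'a::ring_1) \<Rightarrow> 'a set \<Rightarrow> bool" where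
  "k_subspace phi V \<longleftrightarrow> 0 \<in> V \<and> (\<forall>u\<in>V. \<forall>v\<in>V. u + v \<in> V) \<and> (\<forall>c. \<forall>v\<in>V. phi c * v \<in> V)"

definition algebra_filtration :: "('k::field \<Rightarrow> 'a::ring_1) \<Rightarrow> (nat \<Rightarrow> 'a set) \<Rightarrow> bool" where
  "algebra_filtration phi Af \<longleftrightarrow>
     (\<forall>n. k_subspace phi (Af n)) \<and> (\<forall>n. Af n \<subseteq> Af (Suc n)) \<and>
     (\<Union>n. Af n) = UNIV \<and>
     (\<forall>i j. \<forall>u\<in>Af i. \<forall>v\<in>Af j. u * v \<in> Af (i + j))"

text \<open>Rees algebra R = (+)_{n>=0} x^n A_n inside A[x], and xR = (+)_{n>=1} x^n A_{n-1}.\<close>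

definition rees :: "(nat \<Rightarrow> 'a::ring_1 set) \<Rightarrow> 'a fps set" where
  "rees Af = {f. is_apoly f \<and> (\<forall>n. fps_nth f n \<in> Af n)}"

definition x_rees :: "(nat \<Rightarrow> 'a::ring_1 set) \<Rightarrow> 'a fps set" where
  "x_rees Af = {f. is_apoly f \<and> fps_nth f 0 = 0 \<and> (\<forall>n\<ge>1. fps_nth f n \<in> Af (n - 1))}"

definition kpoly_to :: "('k::field \<Rightarrow> 'a::ring_1) \<Rightarrow> 'k poly \<Rightarrow> 'a fps" where
  "kpoly_to phi p = Abs_fps (\<lambda>j. phi (coeff p j))"

definition integral_over_kx :: "('k::field \<Rightarrow> 'a::ring_1) \<Rightarrow> 'a fps \<Rightarrow> bool" where
  "integral_over_kx phi a \<longleftrightarrow>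
     (\<exists>n\<ge>1. \<exists>p :: nat \<Rightarrow> 'k poly. a ^ n + (\<Sum>i<n. kpoly_to phi (p i) * a ^ i) = 0)"

end

theory Submission
  imports Defs
begin

text \<open>Let S be the set of series whose n-th coefficient lies in A_n + k, so that both R and
  k[x] lie in S (k need not lie in A_0). Reducing the integral equation of a modulo xS gives
  \<Sum> c_i a^i \<in> xS with c_i = p_i(0) and c_n = 1. If c_j is the first nonzero c_i, this sum is
  a^j (c_j + u) with u \<in> xS, and comparing coefficients inductively shows a^j \<in> xS.
  Once 1 \<in> A_m, the sets xS and xR agree in all degrees > m, and a^j has zero constant term,
  so (a^j)^(m+1) \<in> xR.\<close>

unbundle fps_syntax

definition coeffs_in :: "(nat \<Rightarrow> 'a set) \<Rightarrow> 'a::zero fps \<Rightarrow> bool" where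
  "coeffs_in V f \<longleftrightarrow> (\<forall>n. f $ n \<in> V n)"

definition x_shift :: "(nat \<Rightarrow> 'a::zero set) \<Rightarrow> nat \<Rightarrow> 'a set" where
  "x_shift V n = (if n = 0 then {0} else V (n - 1))"

lemma x_rees_eq: "x_rees Af = {f. is_apoly f \<and> coeffs_in (x_shift Af) f}"
  by (auto simp: x_rees_def coeffs_in_def x_shift_def)

lemma is_apoly_iff_eventually_zero: "is_apoly f \<longleftrightarrow> (\<exists>D. \<forall>n>D. f $ n = 0)"
  unfolding is_apoly_def finite_nat_set_iff_bounded_le by (simp, meson not_le)

lemma is_apoly_mult:
  fixes f g :: "'a::ring_1 fps"
  assumes "is_apoly f" "is_apoly g"
  shows "is_apoly (f * g)"
proof -
  obtain D1 where D1: "\<forall>n>D1. f $ n = 0" using assms(1) is_apoly_iff_eventually_zero by blast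
  obtain D2 where D2: "\<forall>n>D2. g $ n = 0" using assms(2) is_apoly_iff_eventually_zero by blast
  have "(f * g) $ n = 0" if "n > D1 + D2" for n
  proof -
    have "f $ i * g $ (n - i) = 0" for i
      using D1 D2 that by (cases "i > D1") auto
    then show ?thesis by (simp add: fps_mult_nth)
  qed
  then show ?thesis using is_apoly_iff_eventually_zero by blast
qed

lemma is_apoly_power: "is_apoly (f :: 'a::ring_1 fps) \<Longrightarrow> is_apoly (f ^ n)"
proof (induction n)
  case 0
  show ?case unfolding is_apoly_iff_eventually_zero by (intro exI[of _ 0]) simp
qed (simp add: is_apoly_mult)

lemma k_subspace_sum:
  assumes "k_subspace phi V" "\<forall>i\<in>S. f i \<in> V"
  shows "sum f S \<in> V"
proof (cases "finite S")
  case True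
  then show ?thesis using assms(2)
    by (induction S rule: finite_induct) (use assms(1) in \<open>auto simp: k_subspace_def\<close>)
qed (use assms(1) in \<open>simp add: k_subspace_def\<close>)

lemma fps_mult_nth_mem:
  assumes "k_subspace phi V" "\<forall>i\<le>m. f $ i * g $ (m - i) \<in> V"
  shows "(f * g) $ m \<in> V"
  unfolding fps_mult_nth using assms by (intro k_subspace_sum) auto

lemma coeffs_in_sum:
  assumes "\<forall>n. k_subspace phi (V n)" "\<forall>i\<in>S. coeffs_in V (f i)"
  shows "coeffs_in V (sum f S)"
  using assms unfolding coeffs_in_def fps_sum_nth by (blast intro: k_subspace_sum)

lemma coeffs_in_mult:
  assumes "\<forall>n. k_subspace phi (Z n)" "\<forall>i j. \<forall>u\<in>U i. \<forall>v\<in>V j. u * v \<in> Z (i + j)"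
    and "coeffs_in U f" "coeffs_in V g"
  shows "coeffs_in Z (f * g)"
  unfolding coeffs_in_def
proof
  fix m
  have "f $ i * g $ (m - i) \<in> Z m" if "i \<le> m" for i
    using assms(2-4) that unfolding coeffs_in_def by (metis le_add_diff_inverse)
  then show "(f * g) $ m \<in> Z m" using assms(1) by (blast intro: fps_mult_nth_mem)
qed

locale filtered_k_algebra =
  fixes phi :: "'k::field \<Rightarrow> 'a::ring_1" and F :: "nat \<Rightarrow> 'a set"
  assumes k_algebra: "k_algebra phi" and filtration: "algebra_filtration phi F"
begin

lemma phi_add: "phi (c + d) = phi c + phi d"
  and phi_mult: "phi (c * d) = phi c * phi d"
  and phi_one: "phi 1 = 1"
  and phi_central: "phi c * y = y * phi c"
  using k_algebra unfolding k_algebra_def by blast+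

lemma phi_zero: "phi 0 = 0"
  using phi_add[of 0 0] by simp

lemma phi_uminus: "phi (- c) = - phi c"
  using phi_add[of c "- c"] phi_zero by (simp add: eq_neg_iff_add_eq_0 add.commute)

lemma subspace_uminus: "k_subspace phi V \<Longrightarrow> v \<in> V \<Longrightarrow> - v \<in> V"
  using phi_uminus[of 1] phi_one unfolding k_subspace_def by (metis mult_minus1)

lemma subspace_diff: "k_subspace phi V \<Longrightarrow> u \<in> V \<Longrightarrow> v \<in> V \<Longrightarrow> u - v \<in> V"
  using subspace_uminus[of V v] unfolding k_subspace_def diff_conv_add_uminus by blast

lemma subspace_cancel_scalar:
  assumes "k_subspace phi V" "phi c * v \<in> V" "c \<noteq> 0"
  shows "v \<in> V"
proof -
  have "phi (inverse c) * (phi c * v) = v"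
    using assms(3) by (simp add: mult.assoc[symmetric] phi_mult[symmetric] phi_one)
  then show ?thesis using assms(1,2) unfolding k_subspace_def by metis
qed

lemma F_subspace: "k_subspace phi (F n)"
  and F_mult: "u \<in> F i \<Longrightarrow> v \<in> F j \<Longrightarrow> u * v \<in> F (i + j)"
  and F_exhaustive: "\<exists>m. y \<in> F m"
  using filtration unfolding algebra_filtration_def by blast+

lemma F_add: "u \<in> F n \<Longrightarrow> v \<in> F n \<Longrightarrow> u + v \<in> F n"
  and F_scale: "v \<in> F n \<Longrightarrow> phi c * v \<in> F n"
  using F_subspace[of n] unfolding k_subspace_def by blast+

lemma F_mono: "i \<le> j \<Longrightarrow> F i \<subseteq> F j"
  using filtration lift_Suc_mono_le[of F] unfolding algebra_filtration_def by blast

lemma phi_in_F: "1 \<in> F m \<Longrightarrow> phi c \<in> F m"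
  using F_subspace[of m] unfolding k_subspace_def by (metis mult.right_neutral)

lemma kpoly_to_one: "kpoly_to phi 1 = 1"
  by (rule fps_ext) (simp add: kpoly_to_def phi_one phi_zero)

lemma fps_const_phi_commute: "fps_const (phi c) * f = f * fps_const (phi c)"
  by (rule fps_ext) (simp add: phi_central)

definition Fk :: "nat \<Rightarrow> 'a set" where
  "Fk n = {y + phi c | y c. y \<in> F n}"

lemma Fk_subspace: "k_subspace phi (Fk n)"
  unfolding k_subspace_def Fk_def
proof (intro conjI ballI allI)
  show "0 \<in> {y + phi c |y c. y \<in> F n}"
    using F_subspace[of n] phi_zero unfolding k_subspace_def by force
next
  fix u v assume "u \<in> {y + phi c |y c. y \<in> F n}" "v \<in> {y + phi c |y c. y \<in> F n}"
  then obtain y c z d where "u = y + phi c" "v = z + phi d" "y \<in> F n" "z \<in> F n" by blast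
  moreover have "y + phi c + (z + phi d) = (y + z) + phi (c + d)"
    by (simp add: phi_add algebra_simps)
  ultimately show "u + v \<in> {y + phi c |y c. y \<in> F n}"
    using F_subspace[of n] unfolding k_subspace_def by force
next
  fix e v assume "v \<in> {y + phi c |y c. y \<in> F n}"
  then obtain y c where "v = y + phi c" "y \<in> F n" by blast
  moreover have "phi e * (y + phi c) = phi e * y + phi (e * c)"
    by (simp add: phi_mult distrib_left)
  ultimately show "phi e * v \<in> {y + phi c |y c. y \<in> F n}"
    using F_subspace[of n] unfolding k_subspace_def by force
qed

lemma F_subset_Fk: "F n \<subseteq> Fk n"
  unfolding Fk_def using phi_zero by force

lemma phi_in_Fk: "phi c \<in> Fk n"
  unfolding Fk_def using F_subspace[of n] unfolding k_subspace_def by force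

lemma Fk_mult: "u \<in> Fk i \<Longrightarrow> v \<in> Fk j \<Longrightarrow> u * v \<in> Fk (i + j)"
proof -
  assume "u \<in> Fk i" "v \<in> Fk j"
  then obtain y c z d where yz: "u = y + phi c" "v = z + phi d" "y \<in> F i" "z \<in> F j"
    unfolding Fk_def by blast
  have "u * v = (y * z + phi d * y + phi c * z) + phi (c * d)"
    unfolding yz(1,2) by (simp add: algebra_simps phi_mult phi_central[of d y])
  moreover have "y * z + phi d * y + phi c * z \<in> F (i + j)"
  proof (intro F_add)
    show "y * z \<in> F (i + j)" using F_mult[OF yz(3,4)] .
    show "phi d * y \<in> F (i + j)" using F_scale yz(3) F_mono[of i "i + j"] by auto
    show "phi c * z \<in> F (i + j)" using F_scale yz(4) F_mono[of j "i + j"] by auto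
  qed
  ultimately show ?thesis unfolding Fk_def by blast
qed

lemma Fk_mono: "i \<le> j \<Longrightarrow> Fk i \<subseteq> Fk j"
  unfolding Fk_def using F_mono by blast

lemma Fk_subset_F: "1 \<in> F m \<Longrightarrow> m \<le> n \<Longrightarrow> Fk n \<subseteq> F n"
  unfolding Fk_def using phi_in_F F_mono F_subspace[of n] unfolding k_subspace_def by blast

lemma x_shift_Fk_subspace: "k_subspace phi (x_shift Fk n)"
  using Fk_subspace unfolding x_shift_def k_subspace_def by auto

lemma x_shift_Fk_mult: "u \<in> x_shift Fk i \<Longrightarrow> v \<in> Fk j \<Longrightarrow> u * v \<in> x_shift Fk (i + j)"
proof (cases "i = 0")
  case False
  then show "u \<in> x_shift Fk i \<Longrightarrow> v \<in> Fk j \<Longrightarrow> u * v \<in> x_shift Fk (i + j)"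
    using Fk_mult[of u "i - 1" v j] unfolding x_shift_def by (simp add: add.commute)
qed (use Fk_subspace in \<open>simp add: x_shift_def k_subspace_def\<close>)

lemma coeffs_in_Fk_mult: "coeffs_in Fk f \<Longrightarrow> coeffs_in Fk g \<Longrightarrow> coeffs_in Fk (f * g)"
  using coeffs_in_mult[of phi Fk Fk Fk] Fk_subspace Fk_mult by blast

lemma coeffs_in_x_shift_Fk_mult:
  "coeffs_in (x_shift Fk) f \<Longrightarrow> coeffs_in Fk g \<Longrightarrow> coeffs_in (x_shift Fk) (f * g)"
  using coeffs_in_mult[of phi "x_shift Fk" "x_shift Fk" Fk] x_shift_Fk_subspace x_shift_Fk_mult
  by blast

lemma coeffs_in_Fk_const: "coeffs_in Fk (fps_const (phi c))"
  unfolding coeffs_in_def using phi_in_Fk Fk_subspace unfolding k_subspace_def by simp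

lemma coeffs_in_Fk_power: "coeffs_in Fk f \<Longrightarrow> coeffs_in Fk (f ^ i)"
  by (induction i) (use coeffs_in_Fk_const[of 1] phi_one coeffs_in_Fk_mult in auto)

lemma x_shift_Fk_subset_Fk: "x_shift Fk n \<subseteq> Fk n"
  using Fk_subspace[of n] Fk_mono[of "n - 1" n] unfolding x_shift_def k_subspace_def by auto

lemma coeffs_in_x_shift_Fk_power:
  assumes "coeffs_in (x_shift Fk) b"
  shows "coeffs_in (x_shift Fk) (b ^ Suc M)"
proof -
  have "coeffs_in Fk b" using assms x_shift_Fk_subset_Fk unfolding coeffs_in_def by blast
  then show ?thesis
    unfolding power_Suc using assms coeffs_in_Fk_power coeffs_in_x_shift_Fk_mult by blast
qed

lemma coeffs_in_x_shift_Fk_constant_term: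
  "coeffs_in (x_shift Fk) (fps_const (phi (coeff p 0)) - kpoly_to phi p)"
  unfolding coeffs_in_def x_shift_def
  using phi_in_Fk by (simp add: kpoly_to_def phi_uminus[symmetric])

lemma coeffs_in_x_shift_Fk_reduction:
  assumes "coeffs_in Fk a" "(\<Sum>i\<le>n. kpoly_to phi (q i) * a ^ i) = 0"
  shows "coeffs_in (x_shift Fk) (\<Sum>i\<le>n. fps_const (phi (coeff (q i) 0)) * a ^ i)"
proof -
  have "(\<Sum>i\<le>n. fps_const (phi (coeff (q i) 0)) * a ^ i)
      = (\<Sum>i\<le>n. (fps_const (phi (coeff (q i) 0)) - kpoly_to phi (q i)) * a ^ i)"
    using assms(2) by (simp add: left_diff_distrib sum_subtractf)
  then show ?thesis
    using x_shift_Fk_subspace coeffs_in_x_shift_Fk_mult[OF coeffs_in_x_shift_Fk_constant_term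
        coeffs_in_Fk_power[OF assms(1)]]
    by (auto intro!: coeffs_in_sum)
qed

text \<open>In effect e + u is invertible modulo every power of x, since e \<noteq> 0 and u(0) = 0.\<close>

lemma coeffs_in_x_shift_Fk_cancel:
  assumes prod: "coeffs_in (x_shift Fk) (b * (fps_const (phi e) + u))"
    and "e \<noteq> 0" "u $ 0 = 0" "coeffs_in Fk u"
  shows "coeffs_in (x_shift Fk) b"
  unfolding coeffs_in_def
proof
  fix m show "b $ m \<in> x_shift Fk m"
  proof (induction m rule: less_induct)
    case (less m)
    have "(b * u) $ m \<in> x_shift Fk m"
    proof (rule fps_mult_nth_mem[OF x_shift_Fk_subspace], intro allI impI)
      fix i assume "i \<le> m"
      show "b $ i * u $ (m - i) \<in> x_shift Fk m"
      proof (cases "i = m")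
        case True
        then show ?thesis using assms(3) x_shift_Fk_subspace[of m] by (simp add: k_subspace_def)
      next
        case False
        with \<open>i \<le> m\<close> show ?thesis
          using x_shift_Fk_mult[OF less[of i], of "u $ (m - i)" "m - i"] assms(4)
          unfolding coeffs_in_def by simp
      qed
    qed
    moreover have "(b * (fps_const (phi e) + u)) $ m = phi e * b $ m + (b * u) $ m"
      by (simp add: distrib_left phi_central)
    ultimately have "phi e * b $ m \<in> x_shift Fk m"
      using prod subspace_diff[OF x_shift_Fk_subspace] unfolding coeffs_in_def
      by (metis add_diff_cancel_right')
    then show ?case by (rule subspace_cancel_scalar[OF x_shift_Fk_subspace _ assms(2)])
  qed
qed

lemma power_in_x_shift_Fk:
  assumes a0: "a $ 0 = 0" and a: "coeffs_in Fk a" and "c n \<noteq> 0"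
    and sum: "coeffs_in (x_shift Fk) (\<Sum>i\<le>n. fps_const (phi (c i)) * a ^ i)"
  shows "\<exists>j. coeffs_in (x_shift Fk) (a ^ j)"
proof -
  define j where "j = (LEAST i. c i \<noteq> 0)"
  have "j \<le> n" unfolding j_def using \<open>c n \<noteq> 0\<close> by (rule Least_le)
  have "c j \<noteq> 0" unfolding j_def using \<open>c n \<noteq> 0\<close> by (rule LeastI)
  have below_j: "c i = 0" if "i < j" for i using not_less_Least[OF that[unfolded j_def]] by blast
  define u where "u = (\<Sum>i\<in>{Suc j..n}. a ^ (i - j) * fps_const (phi (c i)))"
  have "(\<Sum>i\<le>n. fps_const (phi (c i)) * a ^ i) = (\<Sum>i\<in>{j..n}. fps_const (phi (c i)) * a ^ i)"
    by (rule sum.mono_neutral_right) (auto simp: below_j phi_zero)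
  also have "\<dots> = a ^ j * (fps_const (phi (c j)) + u)"
  proof -
    have "(\<Sum>i\<in>{Suc j..n}. fps_const (phi (c i)) * a ^ i) = a ^ j * u"
      unfolding u_def sum_distrib_left
      by (rule sum.cong) (auto simp: fps_const_phi_commute simp flip: mult.assoc power_add)
    moreover have "{j..n} = insert j {Suc j..n}" using \<open>j \<le> n\<close> by auto
    ultimately show ?thesis by (simp add: distrib_left fps_const_phi_commute)
  qed
  finally have "coeffs_in (x_shift Fk) (a ^ j * (fps_const (phi (c j)) + u))"
    using sum by simp
  moreover have "u $ 0 = 0"
    unfolding u_def fps_sum_nth using a0 by (simp add: startsby_zero_power)
  moreover have "coeffs_in Fk u"
    unfolding u_def using Fk_subspace coeffs_in_Fk_mult[OF coeffs_in_Fk_power[OF a] coeffs_in_Fk_const]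
    by (auto intro!: coeffs_in_sum)
  ultimately show ?thesis using coeffs_in_x_shift_Fk_cancel \<open>c j \<noteq> 0\<close> by blast
qed

lemma x_shift_Fk_power_in_x_rees:
  assumes "1 \<in> F m" "is_apoly b" "coeffs_in (x_shift Fk) b"
  shows "b ^ Suc m \<in> x_rees F"
  unfolding x_rees_eq
proof (intro CollectI conjI)
  show "is_apoly (b ^ Suc m)" using assms(2) by (rule is_apoly_power)
  have "b $ 0 = 0" using assms(3) unfolding coeffs_in_def x_shift_def by (metis singletonD)
  show "coeffs_in (x_shift F) (b ^ Suc m)"
    unfolding coeffs_in_def
  proof
    fix q
    show "(b ^ Suc m) $ q \<in> x_shift F q"
    proof (cases "q < Suc m")
      case True
      then have "(b ^ Suc m) $ q = 0" using startsby_zero_power_prefix[OF \<open>b $ 0 = 0\<close>] by blast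
      then show ?thesis using F_subspace by (simp add: x_shift_def k_subspace_def)
    next
      case False
      then have "x_shift Fk q \<subseteq> x_shift F q"
        using Fk_subset_F[OF assms(1), of "q - 1"] by (simp add: x_shift_def)
      then show ?thesis
        using coeffs_in_x_shift_Fk_power[OF assms(3)] unfolding coeffs_in_def by blast
    qed
  qed
qed

end

theorem lemma5p2:
  fixes phi :: "'k::field \<Rightarrow> 'a::ring_1"
    and Af :: "nat \<Rightarrow> 'a set"
    and a :: "'a fps"
  assumes "k_algebra phi"
    and "algebra_filtration phi Af"
    and "a \<in> rees Af"
    and "fps_nth a 0 = 0"
    and "integral_over_kx phi a"
  shows "\<exists>N::nat. a ^ N \<in> x_rees Af"
proof -
  interpret filtered_k_algebra phi Af using assms(1,2) by unfold_locales
  have a: "coeffs_in Fk a" "is_apoly a"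
    using assms(3) F_subset_Fk unfolding rees_def coeffs_in_def by auto
  obtain n p where "a ^ n + (\<Sum>i<n. kpoly_to phi (p i) * a ^ i) = 0"
    using assms(5) unfolding integral_over_kx_def by blast
  define q where "q i = (if i = n then 1 else p i)" for i
  have "(\<Sum>i\<le>n. kpoly_to phi (q i) * a ^ i) = (\<Sum>i<n. kpoly_to phi (p i) * a ^ i) + a ^ n"
    by (simp add: q_def kpoly_to_one flip: lessThan_Suc_atMost)
  also have "\<dots> = 0" using \<open>a ^ n + _ = 0\<close> by (simp add: add.commute)
  finally have "(\<Sum>i\<le>n. kpoly_to phi (q i) * a ^ i) = 0" .
  then have "coeffs_in (x_shift Fk) (\<Sum>i\<le>n. fps_const (phi (coeff (q i) 0)) * a ^ i)"
    by (rule coeffs_in_x_shift_Fk_reduction[OF a(1)])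
  moreover have "coeff (q n) 0 \<noteq> 0" by (simp add: q_def)
  ultimately obtain j where "coeffs_in (x_shift Fk) (a ^ j)"
    using power_in_x_shift_Fk[OF assms(4) a(1), of "\<lambda>i. coeff (q i) 0" n] by blast
  moreover obtain m where "1 \<in> Af m" using F_exhaustive by blast
  ultimately have "(a ^ j) ^ Suc m \<in> x_rees Af"
    using x_shift_Fk_power_in_x_rees is_apoly_power[OF a(2)] by blast
  then show ?thesis unfolding power_mult[symmetric] by blast
qed

end
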